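(* Let $G$ be a finite simple connected graph on $n$ vertices and $m$ a positive integer such that for every set $S$ of at most $m$ vertices, the graph $G-\overline N(S)$ has a connected component with more than $n/2$ vertices. Then $c_{\infty}(G)>m$.
   Context: $N(S)$ is the set of vertices with a neighbour in $S$, $\overline N(S)=S\cup N(S)$, and $G-A$ is the subgraph induced by $V(G)\setminus A$. Cops and Robber with an infinitely fast robber: the game is played on a graph $G$. A set of cops first choose initial vertices (several cops may share a vertex); then the robber, knowing their positions, chooses a vertex. Then the players move in alternating rounds, cops first. In the cops' turn each cop either stays or moves to an adjacent vertex; in the robber's turn she either stays or moves along any path of $G$ starting at her current vertex that contains no vertex currently occupied by a cop. The cops win if at some point a cop moves to the vertex occupied by the robber. $c_{\infty}(G)$ is the minimum number of cops for which the cops have a strategy that guarantees a win. *)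

theory Defs
  imports Main
begin

definition simple_graph :: "'a set \<Rightarrow> ('a \<Rightarrow> 'a \<Rightarrow> bool) \<Rightarrow> bool" where
  "simple_graph V E \<longleftrightarrow> finite V \<and> (\<forall>u v. E u v \<longrightarrow> u \<in> V \<and> v \<in> V)
     \<and> (\<forall>u v. E u v \<longrightarrow> E v u) \<and> (\<forall>v. \<not> E v v)"

definition induced :: "'a set \<Rightarrow> ('a \<Rightarrow> 'a \<Rightarrow> bool) \<Rightarrow> 'a \<Rightarrow> 'a \<Rightarrow> bool" where
  "induced W E x y \<longleftrightarrow> E x y \<and> x \<in> W \<and> y \<in> W"

definition connected_graph :: "'a set \<Rightarrow> ('a \<Rightarrow> 'a \<Rightarrow> bool) \<Rightarrow> bool" where
  "connected_graph V E \<longleftrightarrow> (\<forall>u\<in>V. \<forall>v\<in>V. (induced V E)\<^sup>*\<^sup>* u v)"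

definition nbhd :: "('a \<Rightarrow> 'a \<Rightarrow> bool) \<Rightarrow> 'a set \<Rightarrow> 'a set" where
  "nbhd E S = {v. \<exists>u\<in>S. E u v}"

definition closed_nbhd :: "('a \<Rightarrow> 'a \<Rightarrow> bool) \<Rightarrow> 'a set \<Rightarrow> 'a set" where
  "closed_nbhd E S = S \<union> nbhd E S"

definition component_del :: "'a set \<Rightarrow> ('a \<Rightarrow> 'a \<Rightarrow> bool) \<Rightarrow> 'a set \<Rightarrow> 'a \<Rightarrow> 'a set" where
  "component_del V E A v = {w \<in> V - A. (induced (V - A) E)\<^sup>*\<^sup>* v w}"

text \<open>Cops and Robber with an infinitely fast robber.
  A position (cs, r) is the situation just before the cops' turn: cs is the list of
  cop positions (one entry per cop, repetitions allowed), r the robber's vertex.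
  The cops move (each cop stays or moves to a neighbour); they win if some cop is
  now on r; otherwise the robber moves to any vertex reachable from r by a path
  in G avoiding all vertices occupied by cops.  cops_win V E cs r holds iff the
  cops can force a capture from (cs, r) (least fixed point = win in finitely many
  rounds against every robber behaviour).\<close>

definition robber_reach :: "'a set \<Rightarrow> ('a \<Rightarrow> 'a \<Rightarrow> bool) \<Rightarrow> 'a set \<Rightarrow> 'a \<Rightarrow> 'a \<Rightarrow> bool" where
  "robber_reach V E C r r' \<longleftrightarrow> (induced (V - C) E)\<^sup>*\<^sup>* r r'"

definition cop_step :: "('a \<Rightarrow> 'a \<Rightarrow> bool) \<Rightarrow> 'a list \<Rightarrow> 'a list \<Rightarrow> bool" where
  "cop_step E cs cs' \<longleftrightarrow> list_all2 (\<lambda>c c'. c' = c \<or> E c c') cs cs'"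

inductive cops_win :: "'a set \<Rightarrow> ('a \<Rightarrow> 'a \<Rightarrow> bool) \<Rightarrow> 'a list \<Rightarrow> 'a \<Rightarrow> bool"
  for V E where
  win: "cop_step E cs cs' \<Longrightarrow>
        (r \<in> set cs' \<or> (\<forall>r'. robber_reach V E (set cs') r r' \<longrightarrow> cops_win V E cs' r'))
        \<Longrightarrow> cops_win V E cs r"

definition k_cops_win :: "'a set \<Rightarrow> ('a \<Rightarrow> 'a \<Rightarrow> bool) \<Rightarrow> nat \<Rightarrow> bool" where
  "k_cops_win V E k \<longleftrightarrow> (\<exists>cs. length cs = k \<and> set cs \<subseteq> V \<and> (\<forall>r\<in>V. cops_win V E cs r))"

definition c_inf :: "'a set \<Rightarrow> ('a \<Rightarrow> 'a \<Rightarrow> bool) \<Rightarrow> nat" where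
  "c_inf V E = (LEAST k. k_cops_win V E k)"

end

theory Submission
  imports Defs
begin

text \<open>The robber keeps the invariant of standing in a component of \<open>G - N[C]\<close> with more
  than \<open>n/2\<close> vertices, where \<open>C\<close> is the set of cop positions. After the cops move to \<open>C'\<close>,
  we have \<open>C' \<subseteq> N[C]\<close>, so they cannot capture her, and her old component avoids \<open>C'\<close>.
  By hypothesis \<open>G - N[C']\<close> also has a component with more than \<open>n/2\<close> vertices; two such
  vertex sets must meet, so the robber can run inside her old component into the new one.\<close>

definition majority_component :: "'a set \<Rightarrow> ('a \<Rightarrow> 'a \<Rightarrow> bool) \<Rightarrow> 'a set \<Rightarrow> 'a \<Rightarrow> bool" where
  "majority_component V E A v \<longleftrightarrow> v \<in> V - A \<and> card V < 2 * card (component_del V E A v)"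

lemma induced_rtranclp_sym:
  assumes "\<forall>u v. E u v \<longrightarrow> E v u" and "(induced W E)\<^sup>*\<^sup>* a b"
  shows "(induced W E)\<^sup>*\<^sup>* b a"
  using assms(2)
proof (induction rule: rtranclp_induct)
  case (step y z)
  then have "induced W E z y" using assms(1) by (auto simp: induced_def)
  then show ?case using step(3) by (rule converse_rtranclp_into_rtranclp)
qed simp

lemma induced_rtranclp_mono:
  assumes "(induced W E)\<^sup>*\<^sup>* a b" and "W \<subseteq> W'"
  shows "(induced W' E)\<^sup>*\<^sup>* a b"
  using assms(1)
  by (induction rule: rtranclp_induct)
     (use assms(2) in \<open>auto simp: induced_def intro: rtranclp.rtrancl_into_rtrancl\<close>)

lemma component_del_eq:
  assumes "\<forall>u v. E u v \<longrightarrow> E v u" and "w \<in> component_del V E A v"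
  shows "component_del V E A w = component_del V E A v"
proof -
  have vw: "(induced (V - A) E)\<^sup>*\<^sup>* v w" using assms(2) by (simp add: component_del_def)
  then have "(induced (V - A) E)\<^sup>*\<^sup>* w v" by (rule induced_rtranclp_sym[OF assms(1)])
  with vw show ?thesis unfolding component_del_def by (auto intro: rtranclp_trans)
qed

lemma majority_subsets_intersect:
  assumes "finite V" "A \<subseteq> V" "B \<subseteq> V" "card V < 2 * card A" "card V < 2 * card B"
  shows "A \<inter> B \<noteq> {}"
proof
  assume "A \<inter> B = {}"
  then have "card A + card B = card (A \<union> B)"
    using assms(1-3) by (metis card_Un_disjoint finite_subset)
  also have "\<dots> \<le> card V" using assms(1-3) by (simp add: card_mono)
  finally show False using assms(4,5) by linarith
qed

lemma closed_nbhd_subset: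
  assumes "simple_graph V E" and "S \<subseteq> V"
  shows "closed_nbhd E S \<subseteq> V"
  using assms by (auto simp: simple_graph_def closed_nbhd_def nbhd_def)

lemma cop_step_length: "cop_step E cs cs' \<Longrightarrow> length cs' = length cs"
  by (simp add: cop_step_def list_all2_lengthD)

lemma cop_step_subset_closed_nbhd:
  assumes "cop_step E cs cs'"
  shows "set cs' \<subseteq> closed_nbhd E (set cs)"
proof
  fix x assume "x \<in> set cs'"
  then obtain i where i: "i < length cs'" "cs' ! i = x" by (metis in_set_conv_nth)
  have "length cs = length cs'" using assms by (simp add: cop_step_length)
  with assms i have "cs ! i \<in> set cs" and "x = cs ! i \<or> E (cs ! i) x"
    by (auto simp: cop_step_def list_all2_conv_all_nth)
  then show "x \<in> closed_nbhd E (set cs)" by (auto simp: closed_nbhd_def nbhd_def)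
qed

lemma robber_reaches_majority_component:
  assumes "simple_graph V E"
    and r: "majority_component V E (closed_nbhd E C) r"
    and C': "C' \<subseteq> closed_nbhd E C"
    and v: "majority_component V E (closed_nbhd E C') v"
  obtains w where "robber_reach V E C' r w" "majority_component V E (closed_nbhd E C') w"
proof -
  have fin: "finite V" and sym: "\<forall>u v. E u v \<longrightarrow> E v u"
    using assms(1) by (auto simp: simple_graph_def)
  let ?R = "component_del V E (closed_nbhd E C) r"
  let ?Q = "component_del V E (closed_nbhd E C') v"
  have "?R \<inter> ?Q \<noteq> {}"
    using majority_subsets_intersect[OF fin] r v
    by (auto simp: majority_component_def component_del_def)
  then obtain w where wR: "w \<in> ?R" and wQ: "w \<in> ?Q" by blast
  have "(induced (V - closed_nbhd E C) E)\<^sup>*\<^sup>* r w"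
    using wR by (simp add: component_del_def)
  then have "robber_reach V E C' r w"
    unfolding robber_reach_def by (rule induced_rtranclp_mono) (use C' in auto)
  moreover have "majority_component V E (closed_nbhd E C') w"
    using v wQ component_del_eq[OF sym wQ]
    by (simp add: majority_component_def component_del_def)
  ultimately show thesis by (rule that)
qed

lemma majority_component_not_cops_win:
  assumes sg: "simple_graph V E"
    and H: "\<forall>S. S \<subseteq> V \<and> card S \<le> m \<longrightarrow>
              (\<exists>v. majority_component V E (closed_nbhd E S) v)"
    and "cops_win V E cs r"
  shows "set cs \<subseteq> V \<Longrightarrow> length cs \<le> m \<Longrightarrow>
    majority_component V E (closed_nbhd E (set cs)) r \<Longrightarrow> False"
  using assms(3)
proof (induction rule: cops_win.induct)
  case (win cs cs' r)
  have C': "set cs' \<subseteq> closed_nbhd E (set cs)"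
    using win(1) by (rule cop_step_subset_closed_nbhd)
  have "r \<notin> set cs'"
    using C' win(5) by (auto simp: majority_component_def)
  then have IH: "\<forall>r'. robber_reach V E (set cs') r r' \<longrightarrow> cops_win V E cs' r' \<and>
     (set cs' \<subseteq> V \<longrightarrow> length cs' \<le> m \<longrightarrow>
      majority_component V E (closed_nbhd E (set cs')) r' \<longrightarrow> False)"
    using win(2) by blast
  have csV: "set cs' \<subseteq> V" using C' closed_nbhd_subset[OF sg win(3)] by blast
  have len: "length cs' \<le> m" using win(4) cop_step_length[OF win(1)] by simp
  then have "card (set cs') \<le> m" using card_length le_trans by blast
  then obtain v where "majority_component V E (closed_nbhd E (set cs')) v"
    using H csV by blast
  then obtain w where "robber_reach V E (set cs') r w"
    and "majority_component V E (closed_nbhd E (set cs')) w"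
    using robber_reaches_majority_component[OF sg win(5) C'] by blast
  then show False using IH csV len by blast
qed

lemma ex_k_cops_win:
  assumes "finite V"
  shows "\<exists>k. k_cops_win V E k"
proof -
  obtain xs where xs: "set xs = V" using finite_list[OF assms] by blast
  have "cop_step E xs xs" by (simp add: cop_step_def list.rel_refl)
  then have "\<forall>r\<in>V. cops_win V E xs r" using xs by (auto intro: cops_win.win)
  then show ?thesis using xs unfolding k_cops_win_def by blast
qed

theorem mainTheorem12:
  fixes V :: "'a set" and E :: "'a \<Rightarrow> 'a \<Rightarrow> bool" and m :: nat
  assumes "simple_graph V E"
    and "connected_graph V E"
    and "m \<ge> 1"
    and "\<forall>S. S \<subseteq> V \<and> card S \<le> m \<longrightarrow>
           (\<exists>v \<in> V - closed_nbhd E S.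
              2 * card (component_del V E (closed_nbhd E S) v) > card V)"
  shows "c_inf V E > m"
proof -
  have H: "\<forall>S. S \<subseteq> V \<and> card S \<le> m \<longrightarrow> (\<exists>v. majority_component V E (closed_nbhd E S) v)"
    using assms(4) by (auto simp: majority_component_def)
  have few_cops_lose: "\<not> k_cops_win V E k" if "k \<le> m" for k
  proof
    assume "k_cops_win V E k"
    then obtain cs where cs: "length cs = k" "set cs \<subseteq> V" "\<forall>r\<in>V. cops_win V E cs r"
      by (auto simp: k_cops_win_def)
    have "card (set cs) \<le> m" using cs(1) that card_length le_trans by blast
    then obtain r where r: "majority_component V E (closed_nbhd E (set cs)) r"
      using H cs(2) by blast
    then have "r \<in> V" by (simp add: majority_component_def)
    then show False
      using majority_component_not_cops_win[OF assms(1) H] cs r that by blast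
  qed
  have "k_cops_win V E (c_inf V E)"
    unfolding c_inf_def using ex_k_cops_win assms(1)
    by (metis LeastI simple_graph_def)
  then show ?thesis using few_cops_lose by (meson not_le)
qed

end
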